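(* Under the setting and Assumption 1 described in the context, in the limit $M\gg 1$ (leading order as $M\to\infty$ with $L$, $C$, $T$ and all $\alpha_l$ fixed), the arithmetic mean $m_\lambda:=\frac1P\sum_{i=1}^P\lambda_i$ of the eigenvalues $\lambda_1,\dots,\lambda_P$ of the empirical FIM $F$ satisfies $$ m_\lambda = C\,\frac{\kappa_1}{M},\qquad \kappa_1:=\sum_{l=1}^{L}\frac{\alpha_{l-1}}{\alpha}\,\tilde q^{\,l}\,\hat q^{\,l-1},\qquad \alpha:=\sum_{l=1}^{L-1}\alpha_l\alpha_{l-1}. $$ In particular $m_\lambda=O(1/M)$, since $\kappa_1$ does not depend on $M$.
   Context: Network: a fully connected feedforward network with $L\ge 2$ layers of weights. Layer widths are $M_l=\alpha_l M$ for $l=0,1,\dots,L-1$ (layer $0$ is the input, with $M_0$ units), where the $\alpha_l>0$ are fixed constants and $M$ is a large parameter. The output layer has $M_L=C$ units, with $C$ a fixed constant. Forward pass: $h^0_i=x_i$; for $l=1,\dots,L$, $u^l_i=\sum_{j=1}^{M_{l-1}}W^l_{ij}h^{l-1}_j+b^l_i$; for $l\le L-1$, $h^l_i=\phi(u^l_i)$; the output is linear, $f_{\theta,k}(x)=u^L_k$ for $k=1,\dots,C$. The activation $\phi$ and its derivative $\phi'$ are square integrable with respect to the standard Gaussian measure. The parameter vector $\theta=\{W^l_{ij},b^l_i\}$ has total dimension $P$; to leading order $P=\alpha M^2$ with $\alpha:=\sum_{l=1}^{L-1}\alpha_l\alpha_{l-1}$. Random parameters: the entries are independent with $W^l_{ij}\sim\mathcal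 N(0,\sigma_w^2/M_{l-1})$ and $b^l_i\sim\mathcal N(0,\sigma_b^2)$, where $\sigma_w>0$ and $\sigma_b>0$; the parameters are then held fixed. Inputs: $T$ samples $x(t)\in\mathbb R^{M_0}$, $t=1,\dots,T$, with i.i.d. standard Gaussian entries. Empirical FIM: $F=\frac1T\sum_{t=1}^T\sum_{k=1}^C\nabla_\theta f_{\theta,k}(x(t))\,\nabla_\theta f_{\theta,k}(x(t))^{\top}$. This is a $P\times P$ positive semidefinite matrix with eigenvalues $\lambda_1,\dots,\lambda_P\ge 0$. Backpropagated signals: $\delta^l_{k,i}:=\partial f_{\theta,k}/\partial u^l_i$. These satisfy $\delta^L_{k,i}=1$ if $i=k$ and $0$ otherwise, and $\delta^l_{k,i}=\phi'(u^l_i)\sum_j\delta^{l+1}_{k,j}W^{l+1}_{ji}$. The weight gradients are $\partial f_{\theta,k}/\partial W^l_{ij}=\delta^l_{k,i}h^{l-1}_j$. Macroscopic variables: let $Du$ denote the standard Gaussian measure. For $a>0$, $|b|\le a$ and $c=b/a$, define $$I_\psi[a,b]=\int Dz_1Dz_2\,\psi(\sqrt a z_1)\,\psi\big(\sqrt a(cz_1+\sqrt{1-c^2}z_2)\big).$$ Set $\hat q^0=1$ and $\hat q^0_{st}=0$. For $l=0,\dots,L-1$: - $q^{l+1}=\sigma_w^2\hat q^l+\sigma_b^2$ and $\hat q^{l+1}=\int Du\,\phi^2(\sqrt{q^{l+1}}u)$; - $q^{l+1}_{st}=\sigma_w^2\hat q^l_{st}+\sigma_b^2$ and $\hat q^{l+1}_{st}=I_\phi[q^{l+1},q^{l+1}_{st}]$.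 Backward variables: set $\tilde q^L=\tilde q^L_{st}=1$. For $l=L-1,\dots,1$: - $\tilde q^l=\sigma_w^2\tilde q^{l+1}\int Du\,[\phi'(\sqrt{q^l}u)]^2$; - $\tilde q^l_{st}=\sigma_w^2\tilde q^{l+1}_{st}\,I_{\phi'}[q^l,q^l_{st}]$. In the large-$M$ limit, these describe $\frac1{M_l}\sum_i h^l_i(t)^2\to\hat q^l$, $\frac1{M_l}\sum_ih^l_i(s)h^l_i(t)\to\hat q^l_{st}$ ($s\ne t$), $\sum_i\delta^l_{k,i}(t)^2\to\tilde q^l$ and $\sum_i\delta^l_{k,i}(s)\delta^l_{k,i}(t)\to\tilde q^l_{st}$ ($s\ne t$). Assumption 1 (gradient independence): when evaluating the backpropagated quantities $\tilde q^l$ and $\tilde q^l_{st}$, the parameters in the backward chain may be treated as an independent copy of those in the forward chain. Consequently, the backward recurrences above hold. *)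

theory Defs
  imports "HOL-Probability.Probability" "HOL-Library.Landau_Symbols"
          "Jordan_Normal_Form.Char_Poly"
begin

text \<open>Parameters: W l i j is W^l_{ij}, b l i is b^l_i. N l is the width M_l
  (N 0 = M_0 input, N L = C output). phi the activation, dphi its derivative.
  x the input vector (h^0). Indices are 0-based: unit i of layer l has i < N l.\<close>

fun hact :: "(real \<Rightarrow> real) \<Rightarrow> (nat \<Rightarrow> nat \<Rightarrow> nat \<Rightarrow> real) \<Rightarrow> (nat \<Rightarrow> nat \<Rightarrow> real)
     \<Rightarrow> (nat \<Rightarrow> nat) \<Rightarrow> (nat \<Rightarrow> real) \<Rightarrow> nat \<Rightarrow> nat \<Rightarrow> real"
and preact :: "(real \<Rightarrow> real) \<Rightarrow> (nat \<Rightarrow> nat \<Rightarrow> nat \<Rightarrow> real) \<Rightarrow> (nat \<Rightarrow> nat \<Rightarrow> real)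
     \<Rightarrow> (nat \<Rightarrow> nat) \<Rightarrow> (nat \<Rightarrow> real) \<Rightarrow> nat \<Rightarrow> nat \<Rightarrow> real" where
  "hact phi W b N x 0 i = x i"
| "hact phi W b N x (Suc l) i = phi (preact phi W b N x (Suc l) i)"
| "preact phi W b N x 0 i = 0"
| "preact phi W b N x (Suc l) i =
     (\<Sum>j<N l. W (Suc l) i j * hact phi W b N x l j) + b (Suc l) i"

definition net_out where
  "net_out phi W b N L x k = preact phi W b N x L k"

text \<open>Backpropagated signal delta^l_{k,i}; delta_aux d is delta^{L-d}.\<close>
fun delta_aux :: "(real \<Rightarrow> real) \<Rightarrow> (real \<Rightarrow> real) \<Rightarrow> (nat \<Rightarrow> nat \<Rightarrow> nat \<Rightarrow> real)
     \<Rightarrow> (nat \<Rightarrow> nat \<Rightarrow> real) \<Rightarrow> (nat \<Rightarrow> nat) \<Rightarrow> nat \<Rightarrow> (nat \<Rightarrow> real) \<Rightarrow> nat \<Rightarrow> nat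
     \<Rightarrow> nat \<Rightarrow> real" where
  "delta_aux phi dphi W b N L x k 0 i = (if i = k then 1 else 0)"
| "delta_aux phi dphi W b N L x k (Suc d) i =
     dphi (preact phi W b N x (L - Suc d) i) *
     (\<Sum>j<N (L - d). delta_aux phi dphi W b N L x k d j * W (L - d) j i)"

definition delta where
  "delta phi dphi W b N L x k l i = delta_aux phi dphi W b N L x k (L - l) i"

datatype param = Wp nat nat nat | Bp nat nat

fun grad :: "(real \<Rightarrow> real) \<Rightarrow> (real \<Rightarrow> real) \<Rightarrow> (nat \<Rightarrow> nat \<Rightarrow> nat \<Rightarrow> real)
     \<Rightarrow> (nat \<Rightarrow> nat \<Rightarrow> real) \<Rightarrow> (nat \<Rightarrow> nat) \<Rightarrow> nat \<Rightarrow> (nat \<Rightarrow> real) \<Rightarrow> nat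
     \<Rightarrow> param \<Rightarrow> real" where
  "grad phi dphi W b N L x k (Wp l i j) = delta phi dphi W b N L x k l i * hact phi W b N x (l - 1) j"
| "grad phi dphi W b N L x k (Bp l i) = delta phi dphi W b N L x k l i"

definition param_list :: "(nat \<Rightarrow> nat) \<Rightarrow> nat \<Rightarrow> param list" where
  "param_list N L =
     [Wp l i j. l \<leftarrow> [1..<Suc L], i \<leftarrow> [0..<N l], j \<leftarrow> [0..<N (l - 1)]]
     @ [Bp l i. l \<leftarrow> [1..<Suc L], i \<leftarrow> [0..<N l]]"

definition num_params where "num_params N L = length (param_list N L)"

definition FIM :: "(real \<Rightarrow> real) \<Rightarrow> (real \<Rightarrow> real) \<Rightarrow> (nat \<Rightarrow> nat \<Rightarrow> nat \<Rightarrow> real)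
     \<Rightarrow> (nat \<Rightarrow> nat \<Rightarrow> real) \<Rightarrow> (nat \<Rightarrow> nat) \<Rightarrow> nat \<Rightarrow> nat \<Rightarrow> (nat \<Rightarrow> nat \<Rightarrow> real)
     \<Rightarrow> real mat" where
  "FIM phi dphi W b N L T X =
     (let ps = param_list N L; P = length ps in
      mat P P (\<lambda>(a, c). (1 / real T) * (\<Sum>t<T. \<Sum>k<N L.
          grad phi dphi W b N L (X t) k (ps ! a) * grad phi dphi W b N L (X t) k (ps ! c))))"

text \<open>Arithmetic mean of the eigenvalues of a square real matrix, counted with
  algebraic multiplicity (the complex roots of the characteristic polynomial).\<close>
definition eig_mean :: "real mat \<Rightarrow> real" where
  "eig_mean A = Re (sum_mset (proots (char_poly (map_mat complex_of_real A)))) / real (dim_row A)"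

definition gauss :: "real measure" where
  "gauss = density lborel std_normal_density"

fun qhat :: "(real \<Rightarrow> real) \<Rightarrow> real \<Rightarrow> real \<Rightarrow> nat \<Rightarrow> real"
and qq :: "(real \<Rightarrow> real) \<Rightarrow> real \<Rightarrow> real \<Rightarrow> nat \<Rightarrow> real" where
  "qhat phi sw sb 0 = 1"
| "qhat phi sw sb (Suc l) = (\<integral>u. (phi (sqrt (qq phi sw sb (Suc l)) * u))\<^sup>2 \<partial>gauss)"
| "qq phi sw sb 0 = 0"
| "qq phi sw sb (Suc l) = sw\<^sup>2 * qhat phi sw sb l + sb\<^sup>2"

text \<open>tilde q^l; qtil_aux d is tilde q^{L-d}.\<close>
fun qtil_aux :: "(real \<Rightarrow> real) \<Rightarrow> (real \<Rightarrow> real) \<Rightarrow> real \<Rightarrow> real \<Rightarrow> nat \<Rightarrow> nat \<Rightarrow> real" where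
  "qtil_aux phi dphi sw sb L 0 = 1"
| "qtil_aux phi dphi sw sb L (Suc d) =
     sw\<^sup>2 * qtil_aux phi dphi sw sb L d *
     (\<integral>u. (dphi (sqrt (qq phi sw sb (L - Suc d)) * u))\<^sup>2 \<partial>gauss)"

definition qtil where
  "qtil phi dphi sw sb L l = qtil_aux phi dphi sw sb L (L - l)"

definition alpha_tot :: "(nat \<Rightarrow> real) \<Rightarrow> nat \<Rightarrow> real" where
  "alpha_tot \<alpha> L = (\<Sum>l\<in>{1..L-1}. \<alpha> l * \<alpha> (l - 1))"

definition kappa1 where
  "kappa1 phi dphi sw sb \<alpha> L =
     (\<Sum>l\<in>{1..L}. \<alpha> (l - 1) / alpha_tot \<alpha> L * qtil phi dphi sw sb L l * qhat phi sw sb (l - 1))"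

end

theory Submission
  imports Defs "Jordan_Normal_Form.Schur_Decomposition"
begin

text \<open>The mean eigenvalue of the FIM is its trace divided by the number P of parameters.
  The squared gradient norm splits over layers into the squared norm of the backpropagated
  signal times the squared norm of the previous activity plus one (for the bias), so the order
  parameters make trace/M converge to C times the sum of \<open>\<alpha> (l - 1) * qtil l * qhat (l - 1)\<close>,
  whereas P/M^2 converges to \<open>alpha_tot \<alpha> L\<close>. The regularity hypotheses on the activation
  only serve to justify the order-parameter limits, which enter the theorem directly as
  hypotheses.\<close>

definition mat_trace :: "'a::comm_ring_1 mat \<Rightarrow> 'a" where
  "mat_trace A = (\<Sum>i<dim_row A. A $$ (i, i))"

lemma mat_trace_mult_comm:
  assumes "A \<in> carrier_mat n m" "B \<in> carrier_mat m n"
  shows "mat_trace (A * B) = mat_trace (B * A)"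
proof -
  have "mat_trace (A * B) = (\<Sum>i<n. \<Sum>k<m. A $$ (i, k) * B $$ (k, i))"
    using assms by (simp add: mat_trace_def scalar_prod_def atLeast0LessThan)
  also have "\<dots> = (\<Sum>k<m. \<Sum>i<n. B $$ (k, i) * A $$ (i, k))"
    by (subst sum.swap) (simp add: mult.commute)
  also have "\<dots> = mat_trace (B * A)"
    using assms by (simp add: mat_trace_def scalar_prod_def atLeast0LessThan)
  finally show ?thesis .
qed

lemma mat_trace_similar:
  assumes "similar_mat A B"
  shows "mat_trace A = mat_trace B"
proof -
  obtain n P Q where carr: "{A, B, P, Q} \<subseteq> carrier_mat n n"
    and QP: "Q * P = 1\<^sub>m n" and AB: "A = P * B * Q"
    using similar_matD[OF assms] by blast
  have "mat_trace A = mat_trace (P * (B * Q))"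
    using carr AB by (simp add: assoc_mult_mat[of P n n B n Q n])
  also have "\<dots> = mat_trace (B * Q * P)"
    using carr by (intro mat_trace_mult_comm[of _ n n]) auto
  also have "\<dots> = mat_trace B"
    using carr QP right_mult_one_mat[of B n n] by (simp add: assoc_mult_mat[of B n n Q n P n])
  finally show ?thesis .
qed

lemma proots_linear_factors:
  "proots (\<Prod>a\<leftarrow>as. [:- a, 1:]) = mset (as :: 'a::idom list)"
proof (induction as)
  case (Cons a as)
  have "proots ([:- a, 1:] * (\<Prod>a\<leftarrow>as. [:- a, 1:])) = {#a#} + mset as"
    using Cons.IH by (subst proots_mult) (auto simp: prod_list_zero_iff)
  then show ?case by simp
qed simp

text \<open>A Schur form of the matrix carries the roots of the characteristic polynomial on
  its diagonal, and similarity preserves the trace.\<close>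

lemma sum_proots_char_poly:
  fixes A :: "complex mat"
  assumes A: "A \<in> carrier_mat n n"
  shows "sum_mset (proots (char_poly A)) = mat_trace A"
proof -
  obtain as where "char_poly A = (\<Prod>a\<leftarrow>as. [:- a, 1:])"
    using char_poly_factorized[OF A] by blast
  then obtain B where B: "B \<in> carrier_mat n n" "upper_triangular B" and sim: "similar_mat A B"
    using schur_decomposition_exists[OF A] by blast
  have "char_poly A = (\<Prod>a\<leftarrow>diag_mat B. [:- a, 1:])"
    using char_poly_similar[OF sim] char_poly_upper_triangular[OF B] by simp
  then have "sum_mset (proots (char_poly A)) = sum_list (diag_mat B)"
    by (simp add: proots_linear_factors sum_mset_sum_list)
  also have "\<dots> = mat_trace B"
    using B by (simp add: diag_mat_def mat_trace_def sum_list_sum_nth atLeast0LessThan)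
  finally show ?thesis
    using mat_trace_similar[OF sim] by simp
qed

lemma eig_mean_eq_trace:
  assumes A: "A \<in> carrier_mat n n"
  shows "eig_mean A = mat_trace A / real n"
proof -
  have "sum_mset (proots (char_poly (map_mat complex_of_real A))) = complex_of_real (mat_trace A)"
    using A by (simp add: sum_proots_char_poly[of _ n] mat_trace_def)
  then show ?thesis
    using A by (simp add: eig_mean_def)
qed

lemma sum_list_param_list:
  fixes f :: "param \<Rightarrow> 'a::comm_monoid_add"
  shows "sum_list (map f (param_list N L)) =
    (\<Sum>l\<in>{1..L}. (\<Sum>i<N l. \<Sum>j<N (l - 1). f (Wp l i j)) + (\<Sum>i<N l. f (Bp l i)))"
proof -
  have concat: "sum_list (concat xss) = sum_list (map sum_list xss)" for xss :: "'a list list"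
    by (induction xss) auto
  show ?thesis
    unfolding param_list_def
    by (simp add: map_concat concat comp_def interv_sum_list_conv_sum_set_nat sum.distrib
        atLeast0LessThan atLeastLessThanSuc_atLeastAtMost del: upt_Suc)
qed

lemma num_params_eq:
  "real (num_params N L) = (\<Sum>l\<in>{1..L}. real (N l) * real (N (l - 1)) + real (N l))"
proof -
  have "real (num_params N L) = (\<Sum>_\<leftarrow>param_list N L. 1)"
    unfolding num_params_def by (simp add: sum_list_triv)
  then show ?thesis
    by (simp add: sum_list_param_list)
qed

text \<open>Since the weight gradient is the outer product of the backpropagated signal and the
  previous activity, the squared gradient norm factorises layer by layer.\<close>

lemma sum_sq_grad:
  "(\<Sum>p\<leftarrow>param_list N L. (grad phi dphi W b N L x k p)\<^sup>2) =
    (\<Sum>l\<in>{1..L}. (\<Sum>i<N l. (delta phi dphi W b N L x k l i)\<^sup>2) *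
                   ((\<Sum>j<N (l - 1). (hact phi W b N x (l - 1) j)\<^sup>2) + 1))"
  unfolding sum_list_param_list
  by (simp add: power_mult_distrib sum_product distrib_left)

lemma FIM_carrier: "FIM phi dphi W b N L T X \<in> carrier_mat (num_params N L) (num_params N L)"
  unfolding FIM_def num_params_def Let_def by simp

lemma mat_trace_FIM:
  "mat_trace (FIM phi dphi W b N L T X) = 1 / real T * (\<Sum>t<T. \<Sum>k<N L. \<Sum>l\<in>{1..L}.
      (\<Sum>i<N l. (delta phi dphi W b N L (X t) k l i)\<^sup>2) *
      ((\<Sum>j<N (l - 1). (hact phi W b N (X t) (l - 1) j)\<^sup>2) + 1))"
proof -
  define ps where "ps = param_list N L"
  have "mat_trace (FIM phi dphi W b N L T X) =
      1 / real T * (\<Sum>a<length ps. \<Sum>t<T. \<Sum>k<N L. (grad phi dphi W b N L (X t) k (ps ! a))\<^sup>2)"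
    unfolding mat_trace_def FIM_def Let_def ps_def[symmetric]
    by (simp add: power2_eq_square sum_distrib_left)
  also have "\<dots> = 1 / real T * (\<Sum>t<T. \<Sum>k<N L. \<Sum>p\<leftarrow>ps. (grad phi dphi W b N L (X t) k p)\<^sup>2)"
    by (simp add: sum.swap[of _ "{..<length ps}"] sum_list_sum_nth atLeast0LessThan)
  finally show ?thesis
    unfolding ps_def sum_sq_grad .
qed

lemma width_ratio_limit:
  fixes M :: "nat \<Rightarrow> real" and N :: "nat \<Rightarrow> nat \<Rightarrow> nat"
  assumes M: "filterlim M at_top sequentially"
    and widths: "\<And>n l. l < L \<Longrightarrow> real (N n l) = \<alpha> l * M n"
    and width_out: "\<And>n. N n L = C"
    and "l \<le> L"
  shows "(\<lambda>n. real (N n l) / M n) \<longlonglongrightarrow> (if l < L then \<alpha> l else 0)"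
proof (cases "l < L")
  case True
  have "eventually (\<lambda>n. 0 < M n) sequentially"
    using M unfolding filterlim_at_top_dense by blast
  then have "eventually (\<lambda>n. \<alpha> l = real (N n l) / M n) sequentially"
    by eventually_elim (simp add: widths[OF True])
  then show ?thesis
    using True Lim_transform_eventually[OF tendsto_const] by simp
next
  case False
  then have "l = L" using \<open>l \<le> L\<close> by linarith
  then show ?thesis
    using tendsto_divide_0[OF tendsto_const filterlim_at_top_imp_at_infinity[OF M]]
    by (simp add: width_out)
qed

lemma num_params_scaled_limit:
  fixes M :: "nat \<Rightarrow> real"
  assumes M: "filterlim M at_top sequentially"
    and widths: "\<And>n l. l < L \<Longrightarrow> real (N n l) = \<alpha> l * M n"
    and width_out: "\<And>n. N n L = C"
    and "L \<ge> 1"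
  shows "(\<lambda>n. real (num_params (N n) L) / (M n)\<^sup>2) \<longlonglongrightarrow> alpha_tot \<alpha> L"
proof -
  define r where "r n l = real (N n l) / M n" for n l
  define \<alpha>' where "\<alpha>' l = (if l < L then \<alpha> l else 0)" for l
  have r: "(\<lambda>n. r n l) \<longlonglongrightarrow> \<alpha>' l" if "l \<le> L" for l
    unfolding r_def \<alpha>'_def
    by (rule width_ratio_limit[where N = N and \<alpha> = \<alpha> and C = C, OF M widths width_out that])
  have inv: "(\<lambda>n. 1 / M n) \<longlonglongrightarrow> 0"
    using tendsto_divide_0[OF tendsto_const filterlim_at_top_imp_at_infinity[OF M]] .
  have "(\<lambda>n. \<Sum>l\<in>{1..L}. r n l * r n (l - 1) + r n l * (1 / M n))
      \<longlonglongrightarrow> (\<Sum>l\<in>{1..L}. \<alpha>' l * \<alpha>' (l - 1) + \<alpha>' l * 0)"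
    by (intro tendsto_intros r inv) auto
  moreover have "(\<Sum>l\<in>{1..L}. \<alpha>' l * \<alpha>' (l - 1) + \<alpha>' l * 0) = alpha_tot \<alpha> L"
  proof -
    have "{1..L} = insert L {1..L - 1}" "L \<notin> {1..L - 1}" using \<open>L \<ge> 1\<close> by auto
    then have "(\<Sum>l\<in>{1..L}. \<alpha>' l * \<alpha>' (l - 1) + \<alpha>' l * 0) = (\<Sum>l\<in>{1..L - 1}. \<alpha>' l * \<alpha>' (l - 1))"
      by (simp add: \<alpha>'_def)
    also have "\<dots> = alpha_tot \<alpha> L"
      unfolding alpha_tot_def \<alpha>'_def by (intro sum.cong) auto
    finally show ?thesis .
  qed
  moreover have "(\<Sum>l\<in>{1..L}. r n l * r n (l - 1) + r n l * (1 / M n)) =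
      real (num_params (N n) L) / (M n)\<^sup>2" for n
    unfolding num_params_eq r_def
    by (simp add: sum_divide_distrib add_divide_distrib power2_eq_square)
  ultimately show ?thesis by simp
qed

lemma layer_sum_scaled_limit:
  fixes M :: "nat \<Rightarrow> real" and N :: "nat \<Rightarrow> nat \<Rightarrow> nat"
    and D :: "nat \<Rightarrow> nat \<Rightarrow> nat \<Rightarrow> nat \<Rightarrow> real" and H :: "nat \<Rightarrow> nat \<Rightarrow> nat \<Rightarrow> real"
  assumes M: "filterlim M at_top sequentially"
    and widths: "\<And>n l. l < L \<Longrightarrow> real (N n l) = \<alpha> l * M n"
    and width_out: "\<And>n. N n L = C"
    and "T \<ge> 1"
    and D: "\<And>t k l. t < T \<Longrightarrow> k < C \<Longrightarrow> 1 \<le> l \<Longrightarrow> l \<le> L \<Longrightarrow> (\<lambda>n. D n t k l) \<longlonglongrightarrow> qt l"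
    and H: "\<And>t l. t < T \<Longrightarrow> l < L \<Longrightarrow> (\<lambda>n. H n t l / real (N n l)) \<longlonglongrightarrow> qh l"
    and H_empty: "\<And>n t l. N n l = 0 \<Longrightarrow> H n t l = 0"
  shows "(\<lambda>n. 1 / real T * (\<Sum>t<T. \<Sum>k<C. \<Sum>l\<in>{1..L}. D n t k l * (H n t (l - 1) + 1)) / M n)
    \<longlonglongrightarrow> real C * (\<Sum>l\<in>{1..L}. \<alpha> (l - 1) * qt l * qh (l - 1))"
proof -
  define r where "r n l = real (N n l) / M n" for n l
  have r: "(\<lambda>n. r n (l - 1)) \<longlonglongrightarrow> \<alpha> (l - 1)" if "l \<in> {1..L}" for l
  proof -
    have "l - 1 < L" using that by auto
    then show ?thesis
      using width_ratio_limit[where N = N and \<alpha> = \<alpha> and C = C and l = "l - 1", OF M widths width_out]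
      unfolding r_def by simp
  qed
  have inv: "(\<lambda>n. 1 / M n) \<longlonglongrightarrow> 0"
    using tendsto_divide_0[OF tendsto_const filterlim_at_top_imp_at_infinity[OF M]] .
  have "(\<lambda>n. 1 / real T * (\<Sum>t<T. \<Sum>k<C. \<Sum>l\<in>{1..L}.
          D n t k l * (r n (l - 1) * (H n t (l - 1) / real (N n (l - 1))) + 1 / M n)))
      \<longlonglongrightarrow> 1 / real T * (\<Sum>t<T. \<Sum>k<C. \<Sum>l\<in>{1..L}. qt l * (\<alpha> (l - 1) * qh (l - 1) + 0))"
    by (intro tendsto_intros D H r inv) auto
  moreover have "1 / real T * (\<Sum>t<T. \<Sum>k<C. \<Sum>l\<in>{1..L}. qt l * (\<alpha> (l - 1) * qh (l - 1) + 0))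
      = real C * (\<Sum>l\<in>{1..L}. \<alpha> (l - 1) * qt l * qh (l - 1))"
    using \<open>T \<ge> 1\<close> by (simp add: mult_ac)
  moreover have "eventually (\<lambda>n.
      1 / real T * (\<Sum>t<T. \<Sum>k<C. \<Sum>l\<in>{1..L}.
          D n t k l * (r n (l - 1) * (H n t (l - 1) / real (N n (l - 1))) + 1 / M n))
      = 1 / real T * (\<Sum>t<T. \<Sum>k<C. \<Sum>l\<in>{1..L}. D n t k l * (H n t (l - 1) + 1)) / M n) sequentially"
  proof -
    have "eventually (\<lambda>n. 0 < M n) sequentially"
      using M unfolding filterlim_at_top_dense by blast
    then show ?thesis
    proof eventually_elim
      case (elim n)
      \<comment> \<open>For an empty layer both sides are \<open>1 / M n\<close>, since \<open>x / 0 = 0\<close>.\<close>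
      have "r n l * (H n t l / real (N n l)) + 1 / M n = (H n t l + 1) / M n" for t l
        using elim H_empty[of n l t] unfolding r_def by (cases "N n l = 0") (simp_all add: field_simps)
      then show ?case
        by (simp add: sum_divide_distrib mult_ac)
    qed
  qed
  ultimately show ?thesis
    using Lim_transform_eventually by fastforce
qed

lemma alpha_tot_pos:
  assumes "L \<ge> 2" and "\<And>l. l < L \<Longrightarrow> \<alpha> l > 0"
  shows "alpha_tot \<alpha> L > 0"
  unfolding alpha_tot_def using assms by (intro sum_pos) auto

lemma bigo_inverse_if_scaled_tendsto:
  fixes f M :: "nat \<Rightarrow> real"
  assumes "(\<lambda>n. M n * f n) \<longlonglongrightarrow> c" and "filterlim M at_top sequentially"
  shows "f \<in> O(\<lambda>n. 1 / M n)"
proof (rule bigoI_tendsto)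
  show "(\<lambda>n. f n / (1 / M n)) \<longlonglongrightarrow> c"
    using assms(1) by (simp add: mult.commute)
  show "eventually (\<lambda>n. 1 / M n \<noteq> 0) sequentially"
  proof -
    have "eventually (\<lambda>n. 0 < M n) sequentially"
      using assms(2) unfolding filterlim_at_top_dense by blast
    then show ?thesis by eventually_elim simp
  qed
qed

theorem theorem1:
  fixes phi dphi :: "real \<Rightarrow> real"
    and sw sb :: real
    and \<alpha> :: "nat \<Rightarrow> real"
    and L C T :: nat
    and Ms :: "nat \<Rightarrow> nat"
    and N :: "nat \<Rightarrow> nat \<Rightarrow> nat"
    and W :: "nat \<Rightarrow> nat \<Rightarrow> nat \<Rightarrow> nat \<Rightarrow> real"
    and b :: "nat \<Rightarrow> nat \<Rightarrow> nat \<Rightarrow> real"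
    and X :: "nat \<Rightarrow> nat \<Rightarrow> nat \<Rightarrow> real"
  assumes L2: "L \<ge> 2" and Cpos: "C \<ge> 1" and Tpos: "T \<ge> 1"
    and sw: "sw > 0" and sb: "sb > 0"
    and alpha_pos: "\<And>l. l < L \<Longrightarrow> \<alpha> l > 0"
    and phi_meas: "phi \<in> borel_measurable borel"
    and dphi_meas: "dphi \<in> borel_measurable borel"
    and phi_L2: "integrable gauss (\<lambda>u. (phi u)\<^sup>2)"
    and dphi_L2: "integrable gauss (\<lambda>u. (dphi u)\<^sup>2)"
    and dphi_deriv: "\<And>u. phi differentiable (at u) \<Longrightarrow> (phi has_real_derivative dphi u) (at u)"
    and M_lim: "filterlim (\<lambda>n. Ms n) at_top sequentially"
    and widths: "\<And>n l. l < L \<Longrightarrow> real (N n l) = \<alpha> l * real (Ms n)"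
    and width_out: "\<And>n. N n L = C"
    and fwd: "\<And>t l. t < T \<Longrightarrow> l < L \<Longrightarrow>
       (\<lambda>n. (\<Sum>i<N n l. (hact phi (W n) (b n) (N n) (X n t) l i)\<^sup>2) / real (N n l))
         \<longlonglongrightarrow> qhat phi sw sb l"
    and bwd: "\<And>t k l. t < T \<Longrightarrow> k < C \<Longrightarrow> 1 \<le> l \<Longrightarrow> l \<le> L \<Longrightarrow>
       (\<lambda>n. \<Sum>i<N n l. (delta phi dphi (W n) (b n) (N n) L (X n t) k l i)\<^sup>2)
         \<longlonglongrightarrow> qtil phi dphi sw sb L l"
  shows "(\<lambda>n. real (Ms n) * eig_mean (FIM phi dphi (W n) (b n) (N n) L T (X n)))
           \<longlonglongrightarrow> real C * kappa1 phi dphi sw sb \<alpha> L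
    \<and> (\<lambda>n. eig_mean (FIM phi dphi (W n) (b n) (N n) L T (X n))) \<in> O(\<lambda>n. 1 / real (Ms n))"
proof -
  define M where "M n = real (Ms n)" for n
  define F where "F n = FIM phi dphi (W n) (b n) (N n) L T (X n)" for n
  define P where "P n = real (num_params (N n) L)" for n
  define S where "S = (\<Sum>l\<in>{1..L}. \<alpha> (l - 1) * qtil phi dphi sw sb L l * qhat phi sw sb (l - 1))"
  have M: "filterlim M at_top sequentially"
    unfolding M_def by (rule filterlim_compose[OF filterlim_real_sequentially M_lim])
  have widths': "\<And>n l. l < L \<Longrightarrow> real (N n l) = \<alpha> l * M n"
    unfolding M_def by (rule widths)
  have trace_lim: "(\<lambda>n. mat_trace (F n) / M n) \<longlonglongrightarrow> real C * S"
    unfolding F_def mat_trace_FIM width_out S_def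
    by (rule layer_sum_scaled_limit[where N = N and \<alpha> = \<alpha> and C = C, OF M widths' width_out Tpos bwd fwd])
      auto
  have P_lim: "(\<lambda>n. P n / (M n)\<^sup>2) \<longlonglongrightarrow> alpha_tot \<alpha> L"
    unfolding P_def using num_params_scaled_limit[where N = N, OF M widths' width_out] L2 by simp
  have "(\<lambda>n. mat_trace (F n) / M n / (P n / (M n)\<^sup>2)) \<longlonglongrightarrow> real C * S / alpha_tot \<alpha> L"
  proof (rule tendsto_divide[OF trace_lim P_lim])
    show "alpha_tot \<alpha> L \<noteq> 0"
      using alpha_tot_pos[of L \<alpha>] L2 alpha_pos by simp
  qed
  moreover have "real C * S / alpha_tot \<alpha> L = real C * kappa1 phi dphi sw sb \<alpha> L"
    unfolding kappa1_def S_def by (simp add: sum_divide_distrib[symmetric])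
  moreover have "eventually (\<lambda>n. mat_trace (F n) / M n / (P n / (M n)\<^sup>2) = M n * eig_mean (F n))
      sequentially"
    using M unfolding filterlim_at_top_dense
    by (auto elim!: eventually_mono simp: F_def P_def eig_mean_eq_trace[OF FIM_carrier] power2_eq_square)
  ultimately have lim: "(\<lambda>n. M n * eig_mean (F n)) \<longlonglongrightarrow> real C * kappa1 phi dphi sw sb \<alpha> L"
    using Lim_transform_eventually by fastforce
  moreover have "(\<lambda>n. eig_mean (F n)) \<in> O(\<lambda>n. 1 / M n)"
    by (rule bigo_inverse_if_scaled_tendsto[OF lim M])
  ultimately show ?thesis
    unfolding M_def F_def by blast
qed

end
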